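(* Let $\mathcal{H}=\mathbb{C}^2$ and consider on $\mathcal{H}^{\otimes3}$ (factors $A,B,C$) the Hermitian operator $$w=a\mathbb{I}+bV_{(AB)}+cV_{(AC)}+dV_{(BC)}+\frac{if}{2}\big(V_{(ABC)}-V_{(CBA)}\big),\qquad a,b,c,d,f\in\mathbb{R}.$$ If $w$ is local-positive, then $w'=a\mathbb{I}+bV_{(AB)}+cV_{(AC)}+dV_{(BC)}$ is local-positive, and $w$ and $w'$ have the same bipartite reductions $\operatorname{Tr}_A$, $\operatorname{Tr}_B$, $\operatorname{Tr}_C$.
   Context: $V_{(XY)}$ denotes the operator swapping tensor factors $X$ and $Y$; $V_{(ABC)}$ denotes the operator permuting the three factors cyclically and $V_{(CBA)}=V_{(ABC)}^{\dagger}$ the inverse cyclic permutation. An operator $M$ on $\mathcal{H}^{\otimes3}$ is local-positive (with respect to the three factors) if $\langle\psi_1\psi_2\psi_3|M|\psi_1\psi_2\psi_3\rangle\ge0$ for all unit vectors $\psi_1,\psi_2,\psi_3\in\mathcal{H}$. *)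

theory Defs
  imports Complex_Main "HOL-Library.Complex_Order"
begin

text \<open>The qubit space H = C^2 has orthonormal basis indexed by bool.
  Operators on H (x) H (x) H (factors A,B,C) are given by their matrix elements
  M x y = <x|M|y> with x,y basis triples (A,B,C).\<close>

type_synonym idx3 = "bool \<times> bool \<times> bool"
type_synonym op3 = "idx3 \<Rightarrow> idx3 \<Rightarrow> complex"
type_synonym op2 = "bool \<times> bool \<Rightarrow> bool \<times> bool \<Rightarrow> complex"

definition Id3 :: op3 where
  "Id3 x y = (if x = y then 1 else 0)"

definition V_AB :: op3 where
  "V_AB = (\<lambda>(i,j,k) (i',j',k'). if i = j' \<and> j = i' \<and> k = k' then 1 else 0)"

definition V_AC :: op3 where
  "V_AC = (\<lambda>(i,j,k) (i',j',k'). if i = k' \<and> j = j' \<and> k = i' then 1 else 0)"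

definition V_BC :: op3 where
  "V_BC = (\<lambda>(i,j,k) (i',j',k'). if i = i' \<and> j = k' \<and> k = j' then 1 else 0)"

text \<open>Cyclic permutation V_(ABC) |x y z> = |z x y> (content of A moves to B, B to C, C to A)\<close>
definition V_ABC :: op3 where
  "V_ABC = (\<lambda>(i,j,k) (i',j',k'). if i = k' \<and> j = i' \<and> k = j' then 1 else 0)"

text \<open>Inverse cyclic permutation V_(CBA) = adjoint of V_(ABC): |x y z> = |y z x>\<close>
definition V_CBA :: op3 where
  "V_CBA = (\<lambda>(i,j,k) (i',j',k'). if i = j' \<and> j = k' \<and> k = i' then 1 else 0)"

definition unit_vec :: "(bool \<Rightarrow> complex) \<Rightarrow> bool" where
  "unit_vec \<psi> \<longleftrightarrow> (\<Sum>x\<in>UNIV. (cmod (\<psi> x))\<^sup>2) = 1"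

definition prod_state :: "(bool \<Rightarrow> complex) \<Rightarrow> (bool \<Rightarrow> complex) \<Rightarrow> (bool \<Rightarrow> complex) \<Rightarrow> idx3 \<Rightarrow> complex" where
  "prod_state \<psi>1 \<psi>2 \<psi>3 = (\<lambda>(i,j,k). \<psi>1 i * \<psi>2 j * \<psi>3 k)"

definition expect :: "op3 \<Rightarrow> (idx3 \<Rightarrow> complex) \<Rightarrow> complex" where
  "expect M \<phi> = (\<Sum>x\<in>UNIV. \<Sum>y\<in>UNIV. cnj (\<phi> x) * M x y * \<phi> y)"

text \<open>local positivity; 0 \<le> z on complex means z is real and nonnegative\<close>
definition local_positive :: "op3 \<Rightarrow> bool" where
  "local_positive M \<longleftrightarrow>
     (\<forall>\<psi>1 \<psi>2 \<psi>3. unit_vec \<psi>1 \<and> unit_vec \<psi>2 \<and> unit_vec \<psi>3 \<longrightarrow>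
        0 \<le> expect M (prod_state \<psi>1 \<psi>2 \<psi>3))"

definition ptrace_A :: "op3 \<Rightarrow> op2" where
  "ptrace_A M = (\<lambda>(j,k) (j',k'). \<Sum>i\<in>UNIV. M (i,j,k) (i,j',k'))"

definition ptrace_B :: "op3 \<Rightarrow> op2" where
  "ptrace_B M = (\<lambda>(i,k) (i',k'). \<Sum>j\<in>UNIV. M (i,j,k) (i',j,k'))"

definition ptrace_C :: "op3 \<Rightarrow> op2" where
  "ptrace_C M = (\<lambda>(i,j) (i',j'). \<Sum>k\<in>UNIV. M (i,j,k) (i',j',k))"

end

theory Submission
  imports Defs
begin

text \<open>
  All permutation operators have real matrix entries, and transposition
  exchanges the two cyclic permutations V_(ABC) and V_(CBA) while fixing the
  identity and the transpositions.  Hence w' is the symmetrisation (w + w^T)/2 of w.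
  Local positivity survives transposition, because the expectation of M^T in a
  product state equals the expectation of M in the complex-conjugate product state,
  which is again a product of unit vectors; it also survives averaging, so w' is
  local-positive.  For the reductions: tracing out any one factor of either cyclic
  permutation yields the swap of the two remaining factors, so the antisymmetric
  term (if/2)(V_(ABC) - V_(CBA)) has vanishing partial traces, and partial traces
  are linear.
\<close>

definition transpose3 :: "op3 \<Rightarrow> op3" where
  "transpose3 M = (\<lambda>x y. M y x)"

definition swap2 :: op2 where
  "swap2 = (\<lambda>(j,k) (j',k'). if j = k' \<and> k = j' then 1 else 0)"

lemma expect_transpose3: "expect (transpose3 M) \<phi> = expect M (\<lambda>x. cnj (\<phi> x))"
  unfolding expect_def transpose3_def
  by (subst sum.swap) (simp add: algebra_simps)

lemma prod_state_cnj:
  "prod_state (\<lambda>x. cnj (\<psi>1 x)) (\<lambda>x. cnj (\<psi>2 x)) (\<lambda>x. cnj (\<psi>3 x))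
     = (\<lambda>x. cnj (prod_state \<psi>1 \<psi>2 \<psi>3 x))"
  unfolding prod_state_def by auto

lemma unit_vec_cnj: "unit_vec \<psi> \<Longrightarrow> unit_vec (\<lambda>x. cnj (\<psi> x))"
  unfolding unit_vec_def by simp

lemma local_positive_transpose3:
  assumes "local_positive M"
  shows "local_positive (transpose3 M)"
  unfolding local_positive_def
proof (intro allI impI)
  fix \<psi>1 \<psi>2 \<psi>3 :: "bool \<Rightarrow> complex"
  assume "unit_vec \<psi>1 \<and> unit_vec \<psi>2 \<and> unit_vec \<psi>3"
  then have "0 \<le> expect M (prod_state (\<lambda>x. cnj (\<psi>1 x)) (\<lambda>x. cnj (\<psi>2 x)) (\<lambda>x. cnj (\<psi>3 x)))"
    using assms unit_vec_cnj unfolding local_positive_def by blast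
  then show "0 \<le> expect (transpose3 M) (prod_state \<psi>1 \<psi>2 \<psi>3)"
    by (simp add: expect_transpose3 prod_state_cnj)
qed

lemma local_positive_average:
  assumes "local_positive M" and "local_positive N"
  shows "local_positive (\<lambda>x y. (M x y + N x y) / 2)"
  unfolding local_positive_def
proof (intro allI impI)
  fix \<psi>1 \<psi>2 \<psi>3 :: "bool \<Rightarrow> complex"
  let ?\<phi> = "prod_state \<psi>1 \<psi>2 \<psi>3"
  assume "unit_vec \<psi>1 \<and> unit_vec \<psi>2 \<and> unit_vec \<psi>3"
  then have "0 \<le> expect M ?\<phi>" and "0 \<le> expect N ?\<phi>"
    using assms unfolding local_positive_def by blast+
  then have "0 \<le> (expect M ?\<phi> + expect N ?\<phi>) / 2"
    by (simp add: less_eq_complex_def)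
  moreover have "expect (\<lambda>x y. (M x y + N x y) / 2) ?\<phi> = (expect M ?\<phi> + expect N ?\<phi>) / 2"
    unfolding expect_def by (simp add: sum.distrib sum_divide_distrib algebra_simps add_divide_distrib)
  ultimately show "0 \<le> expect (\<lambda>x y. (M x y + N x y) / 2) ?\<phi>"
    by (simp only:)
qed

corollary local_positive_symmetrisation:
  "local_positive M \<Longrightarrow> local_positive (\<lambda>x y. (M x y + M y x) / 2)"
  using local_positive_average[OF _ local_positive_transpose3]
  unfolding transpose3_def by blast

lemma Id3_transpose: "Id3 y x = Id3 x y"
  unfolding Id3_def by auto

lemma V_AB_transpose: "V_AB y x = V_AB x y"
  unfolding V_AB_def by (cases x; cases y; auto)

lemma V_AC_transpose: "V_AC y x = V_AC x y"
  unfolding V_AC_def by (cases x; cases y; auto)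

lemma V_BC_transpose: "V_BC y x = V_BC x y"
  unfolding V_BC_def by (cases x; cases y; auto)

lemma V_ABC_transpose: "V_ABC y x = V_CBA x y"
  unfolding V_ABC_def V_CBA_def by (cases x; cases y; auto)

lemma ptrace_cyclic:
  "ptrace_A V_ABC = swap2" "ptrace_A V_CBA = swap2"
  "ptrace_B V_ABC = swap2" "ptrace_B V_CBA = swap2"
  "ptrace_C V_ABC = swap2" "ptrace_C V_CBA = swap2"
  unfolding ptrace_A_def ptrace_B_def ptrace_C_def V_ABC_def V_CBA_def swap2_def
  by (auto simp: UNIV_bool intro!: ext)

lemma ptrace_A_add_traceless:
  assumes "ptrace_A N = ptrace_A K"
  shows "ptrace_A (\<lambda>x y. M x y + z * (N x y - K x y)) = ptrace_A M"
proof -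
  have "(\<Sum>i\<in>UNIV. N (i,j,k) (i,j',k')) = (\<Sum>i\<in>UNIV. K (i,j,k) (i,j',k'))" for j k j' k'
    using fun_cong[OF fun_cong[OF assms], of "(j,k)" "(j',k')"] by (simp add: ptrace_A_def)
  then show ?thesis
    unfolding ptrace_A_def
    by (auto simp: sum.distrib sum_subtractf sum_distrib_left[symmetric] intro!: ext)
qed

lemma ptrace_B_add_traceless:
  assumes "ptrace_B N = ptrace_B K"
  shows "ptrace_B (\<lambda>x y. M x y + z * (N x y - K x y)) = ptrace_B M"
proof -
  have "(\<Sum>j\<in>UNIV. N (i,j,k) (i',j,k')) = (\<Sum>j\<in>UNIV. K (i,j,k) (i',j,k'))" for i k i' k'
    using fun_cong[OF fun_cong[OF assms], of "(i,k)" "(i',k')"] by (simp add: ptrace_B_def)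
  then show ?thesis
    unfolding ptrace_B_def
    by (auto simp: sum.distrib sum_subtractf sum_distrib_left[symmetric] intro!: ext)
qed

lemma ptrace_C_add_traceless:
  assumes "ptrace_C N = ptrace_C K"
  shows "ptrace_C (\<lambda>x y. M x y + z * (N x y - K x y)) = ptrace_C M"
proof -
  have "(\<Sum>k\<in>UNIV. N (i,j,k) (i',j',k)) = (\<Sum>k\<in>UNIV. K (i,j,k) (i',j',k))" for i j i' j'
    using fun_cong[OF fun_cong[OF assms], of "(i,j)" "(i',j')"] by (simp add: ptrace_C_def)
  then show ?thesis
    unfolding ptrace_C_def
    by (auto simp: sum.distrib sum_subtractf sum_distrib_left[symmetric] intro!: ext)
qed

theorem mainTheorem11:
  fixes a b c d f :: real
  defines "w \<equiv> (\<lambda>x y. of_real a * Id3 x y + of_real b * V_AB x y + of_real c * V_AC x y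
                 + of_real d * V_BC x y + (\<i> * of_real f / 2) * (V_ABC x y - V_CBA x y))"
      and "w' \<equiv> (\<lambda>x y. of_real a * Id3 x y + of_real b * V_AB x y + of_real c * V_AC x y
                 + of_real d * V_BC x y)"
  assumes "local_positive w"
  shows "local_positive w' \<and> ptrace_A w = ptrace_A w' \<and> ptrace_B w = ptrace_B w'
         \<and> ptrace_C w = ptrace_C w'"
proof (intro conjI)
  have "w' = (\<lambda>x y. (w x y + w y x) / 2)"
  proof (intro ext)
    fix x y
    show "w' x y = (w x y + w y x) / 2"
      unfolding w_def w'_def
      by (simp only: Id3_transpose[of y x] V_AB_transpose[of y x] V_AC_transpose[of y x]
          V_BC_transpose[of y x] V_ABC_transpose[of y x] V_ABC_transpose[of x y])
         (simp add: field_simps)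
  qed
  then show "local_positive w'"
    using local_positive_symmetrisation[OF assms(3)] by simp
  have w_split: "w = (\<lambda>x y. w' x y + (\<i> * of_real f / 2) * (V_ABC x y - V_CBA x y))"
    unfolding w_def w'_def by simp
  show "ptrace_A w = ptrace_A w'"
    unfolding w_split by (rule ptrace_A_add_traceless) (simp add: ptrace_cyclic)
  show "ptrace_B w = ptrace_B w'"
    unfolding w_split by (rule ptrace_B_add_traceless) (simp add: ptrace_cyclic)
  show "ptrace_C w = ptrace_C w'"
    unfolding w_split by (rule ptrace_C_add_traceless) (simp add: ptrace_cyclic)
qed

end
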